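(* In the Snapshot model, let $t_1,\dots,t_n\ge t_0$ be distinct times and, for each $k$, let $A_{k,1},\dots,A_{k,m_k}$ be mutually disjoint Borel subsets of $\mathbb{R}^d$. Set $R_{t_k}=N-\sum_{l=1}^{m_k}Q_{t_k}(A_{k,l})$ and $\vec Q_k=(Q_{t_k}(A_{k,1}),\dots,Q_{t_k}(A_{k,m_k}),R_{t_k})$. Then the arrangement $\mathscr{Q}=(\vec Q_k)_{k=1,\dots,n}$ follows an ECM distribution (with $N$ individuals and $m_k+1$ categories at time $k$), i.e. there exist nonnegative numbers $\pi_{l_1,\dots,l_n}$, $l_k\in\{1,\dots,m_k+1\}$, summing to $1$, such that $$\varphi_{\mathscr{Q}}(\xi)=\Big\{\sum_{l_1=1}^{m_1+1}\cdots\sum_{l_n=1}^{m_n+1}e^{i(\xi_{1,l_1}+\cdots+\xi_{n,l_n})}\pi_{l_1,\dots,l_n}\Big\}^N\quad\text{for all }\xi.$$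
   Context: Snapshot model: $X_1,\dots,X_N$ are independent $\mathbb{R}^d$-valued processes indexed by $t\ge t_0$, each distributed as a reference process $X$; $\Phi_t(A)=\sum_{j=1}^N\mathbb{1}_A\{X_j(t)\}$. A detection probability $p\in[0,1]$ is fixed. The count field $Q=\{Q_t(A)\}$ satisfies: (Rule 1) for any distinct times $t_1,\dots,t_n$, the spatial processes $Q_{t_1},\dots,Q_{t_n}$ are mutually independent conditionally on $\Phi$; (Rule 2) for mutually disjoint Borel sets $A_1,\dots,A_n$ and any $t\ge t_0$, the variables $Q_t(A_1),\dots,Q_t(A_n)$ are conditionally independent given $\Phi$, with $Q_t(A_j)$ conditionally binomial with size $\Phi_t(A_j)$ and success probability $p$. ECM distribution: a random arrangement $(Q_{k,l})$ follows an ECM distribution with $N$ individuals and full path probabilities $\pi_{l_1,\dots,l_n}$ if it has the same law as the counts $Q_{k,l}=\#\{j: L^{(j)}_k=l\}$ where $N$ individuals independently choose full paths $(L^{(j)}_1,\dots,L^{(j)}_n)$ with common law $\mathbb{P}(L_1=l_1,\dots,L_n=l_n)=\pi_{l_1,\dots,l_n}$; equivalently its characteristic function has the displayed form. *)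

theory Defs
  imports "HOL-Probability.Probability"
begin

definition Phi :: "nat \<Rightarrow> (nat \<Rightarrow> real \<Rightarrow> 'a \<Rightarrow> 'x) \<Rightarrow> real \<Rightarrow> 'x set \<Rightarrow> 'a \<Rightarrow> nat" where
  "Phi N X t A w = card {j. j < N \<and> X j t w \<in> A}"

text \<open>The sigma-algebra generated by the whole configuration Phi, i.e. by all
  X j t with j < N and t \<ge> t0.\<close>
definition snapshot_sigma ::
  "'a measure \<Rightarrow> nat \<Rightarrow> real \<Rightarrow> (nat \<Rightarrow> real \<Rightarrow> 'a \<Rightarrow> 'x::topological_space) \<Rightarrow> 'a measure" where
  "snapshot_sigma M N t0 X =
     sigma (space M) {X j t -` B \<inter> space M | j t B. j < N \<and> t0 \<le> t \<and> B \<in> sets borel}"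

definition Q_sigma ::
  "'a measure \<Rightarrow> (real \<Rightarrow> 'x::topological_space set \<Rightarrow> 'a \<Rightarrow> nat) \<Rightarrow> real \<Rightarrow> 'a measure" where
  "Q_sigma M Q t = sigma (space M) {Q t A -` {c} \<inter> space M | A c. A \<in> sets borel}"

definition snapshot_rule1 ::
  "'a measure \<Rightarrow> 'a measure \<Rightarrow> (real \<Rightarrow> 'x::topological_space set \<Rightarrow> 'a \<Rightarrow> nat) \<Rightarrow> real \<Rightarrow> bool" where
  "snapshot_rule1 M F Q t0 \<longleftrightarrow>
     (\<forall>(n::nat) (tt::nat \<Rightarrow> real) (E::nat \<Rightarrow> 'a set).
        inj_on tt {..<n} \<and> (\<forall>i<n. t0 \<le> tt i \<and> E i \<in> sets (Q_sigma M Q (tt i))) \<longrightarrow>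
        (AE w in M. real_cond_exp M F (\<lambda>w. \<Prod>i<n. indicator (E i) w) w
                    = (\<Prod>i<n. real_cond_exp M F (indicator (E i)) w)))"

text \<open>Rule 2: for disjoint Borel sets, the counts at a fixed time are conditionally
  independent given F, each conditionally Binomial(Phi_t(A_i), p); stated as
  factorisation of the conditional joint probability mass function.\<close>
definition snapshot_rule2 ::
  "'a measure \<Rightarrow> 'a measure \<Rightarrow> nat \<Rightarrow> (nat \<Rightarrow> real \<Rightarrow> 'a \<Rightarrow> 'x::topological_space)
     \<Rightarrow> (real \<Rightarrow> 'x set \<Rightarrow> 'a \<Rightarrow> nat) \<Rightarrow> real \<Rightarrow> real \<Rightarrow> bool" where
  "snapshot_rule2 M F N X Q p t0 \<longleftrightarrow>
     (\<forall>(t::real) (n::nat) (A::nat \<Rightarrow> 'x set) (c::nat \<Rightarrow> nat).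
        t0 \<le> t \<and> (\<forall>i<n. A i \<in> sets borel) \<and> disjoint_family_on A {..<n} \<longrightarrow>
        (AE w in M. real_cond_exp M F
                      (\<lambda>w. \<Prod>i<n. indicator {v \<in> space M. Q t (A i) v = c i} w) w
                    = (\<Prod>i<n. pmf (binomial_pmf (Phi N X t (A i) w) p) (c i))))"

definition snap_vec ::
  "nat \<Rightarrow> (real \<Rightarrow> 'x set \<Rightarrow> 'a \<Rightarrow> nat) \<Rightarrow> (nat \<Rightarrow> real) \<Rightarrow> (nat \<Rightarrow> nat)
     \<Rightarrow> (nat \<Rightarrow> nat \<Rightarrow> 'x set) \<Rightarrow> nat \<Rightarrow> nat \<Rightarrow> 'a \<Rightarrow> real" where
  "snap_vec N Q t m A k l w =
     (if l \<le> m k then real (Q (t k) (A k l) w)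
      else real N - (\<Sum>l'=1..m k. real (Q (t k) (A k l') w)))"

end

theory Submission
  imports Defs
begin

text \<open>Given the paths, Rules 1 and 2 make the counts Q_{t_k}(A_{k,l}) independent binomials with
  sizes Phi_{t_k}(A_{k,l}). Because the A_{k,l} are disjoint, such a count vector, completed by the
  remainder R_{t_k}, has the characteristic function of N individuals that independently fall into
  A_{k,l} with probability p when located there and into the remainder category otherwise. The
  characteristic function of the arrangement is therefore the expectation of a product over
  individuals and times; swapping the two products and using that the paths are i.i.d. gives the
  N-th power of a single expectation, which expands into a sum over category paths L weighted by
  pi_L, the probability that one individual follows L.\<close>

lemma binomial_pmf_generating_function:
  fixes z :: "'b::{comm_ring_1, real_algebra_1}"
  assumes p: "0 \<le> p" "p \<le> 1" and q: "q \<le> N"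
  shows "(\<Sum>s=0..N. of_real (pmf (binomial_pmf q p) s) * z ^ s) = (of_real p * z + of_real (1 - p)) ^ q"
proof -
  have "(\<Sum>s=0..N. of_real (pmf (binomial_pmf q p) s) * z ^ s)
      = (\<Sum>s\<le>q. of_real (pmf (binomial_pmf q p) s) * z ^ s)"
    using q by (intro sum.mono_neutral_right) (auto simp: pmf_binomial[OF p] binomial_eq_0)
  also have "\<dots> = (\<Sum>s\<le>q. of_nat (q choose s) * (of_real p * z) ^ s * of_real (1 - p) ^ (q - s))"
    by (intro sum.cong) (auto simp: pmf_binomial[OF p] power_mult_distrib)
  also have "\<dots> = (of_real p * z + of_real (1 - p)) ^ q"
    by (rule binomial_ring[symmetric])
  finally show ?thesis .
qed

lemma sum_pmf_binomial_eq_1: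
  assumes "0 \<le> p" "p \<le> 1" "q \<le> N"
  shows "(\<Sum>s=0..N. pmf (binomial_pmf q p) s) = 1"
  using binomial_pmf_generating_function[OF assms, where z = "1::real"] by simp

lemma prod_if_eq_power_card:
  assumes "finite J"
  shows "(\<Prod>j\<in>J. \<Prod>l\<in>S. if P j l then a l else 1) = (\<Prod>l\<in>S. (a l :: 'b::comm_monoid_mult) ^ card {j\<in>J. P j l})"
proof -
  have "(\<Prod>j\<in>J. \<Prod>l\<in>S. if P j l then a l else 1) = (\<Prod>l\<in>S. \<Prod>j\<in>J. if P j l then a l else 1)"
    by (rule prod.swap)
  also have "\<dots> = (\<Prod>l\<in>S. \<Prod>j\<in>{j\<in>J. P j l}. a l)"
    using assms by (simp add: prod.inter_filter[symmetric])
  finally show ?thesis by simp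
qed

lemma prod_indicator_Collect:
  assumes "finite L" "w \<in> S"
  shows "(\<Prod>l\<in>L. indicator {v\<in>S. P l v} w :: real) = indicator {v\<in>S. \<forall>l\<in>L. P l v} w"
  using assms by (induction L rule: finite_induct) (auto simp: indicator_def)

lemma (in prob_space) integral_prod_iid:
  fixes H :: "'b \<Rightarrow> 'c::{real_normed_field, banach, second_countable_topology}"
  assumes indep: "indep_vars (\<lambda>_. S) Y I" and I: "finite I"
    and ident: "\<And>j. j \<in> I \<Longrightarrow> distr M S (Y j) = distr M S Z" and Z: "Z \<in> M \<rightarrow>\<^sub>M S"
    and H: "H \<in> borel_measurable S" and bounded: "\<And>x. norm (H x) \<le> B"
  shows "(\<integral>w. (\<Prod>j\<in>I. H (Y j w)) \<partial>M) = (\<integral>w. H (Z w) \<partial>M) ^ card I"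
proof -
  have Y: "Y j \<in> M \<rightarrow>\<^sub>M S" if "j \<in> I" for j
    using indep that by (simp add: indep_vars_def)
  have "(\<integral>w. (\<Prod>j\<in>I. H (Y j w)) \<partial>M) = (\<Prod>j\<in>I. \<integral>w. H (Y j w) \<partial>M)"
  proof (rule indep_vars_lebesgue_integral[OF I])
    show "indep_vars (\<lambda>_. borel) (\<lambda>j w. H (Y j w)) I"
      by (rule indep_vars_compose2[OF indep H])
    show "integrable M (\<lambda>w. H (Y j w))" if "j \<in> I" for j
      by (rule integrable_const_bound[where B = B]) (auto intro: bounded measurable_compose[OF Y[OF that] H])
  qed
  also have "\<dots> = (\<Prod>j\<in>I. \<integral>w. H (Z w) \<partial>M)"
  proof (rule prod.cong[OF refl])
    fix j assume "j \<in> I"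
    then show "(\<integral>w. H (Y j w) \<partial>M) = (\<integral>w. H (Z w) \<partial>M)"
      using integral_distr[OF Y H] integral_distr[OF Z H] ident by metis
  qed
  finally show ?thesis by simp
qed

lemma (in prob_space) integral_comp_finitely_valued:
  fixes f :: "'b \<Rightarrow> 'c::{banach, second_countable_topology}"
  assumes C: "finite C" and events: "\<And>c. c \<in> C \<Longrightarrow> {w\<in>space M. V w = c} \<in> events"
    and total: "(\<Sum>c\<in>C. prob {w\<in>space M. V w = c}) = 1"
    and f: "(\<lambda>w. f (V w)) \<in> borel_measurable M"
  shows "(\<integral>w. f (V w) \<partial>M) = (\<Sum>c\<in>C. prob {w\<in>space M. V w = c} *\<^sub>R f c)"
proof -
  let ?E = "\<lambda>c. {w\<in>space M. V w = c}"
  have "disjoint_family_on ?E C"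
    by (auto simp: disjoint_family_on_def)
  then have "prob (\<Union>c\<in>C. ?E c) = (\<Sum>c\<in>C. prob (?E c))"
    using C events by (intro finite_measure_finite_Union) auto
  then have "AE w in M. w \<in> (\<Union>c\<in>C. ?E c)"
    using total by (intro AE_prob_1) simp
  then have ae: "AE w in M. f (V w) = (\<Sum>c\<in>C. indicator (?E c) w *\<^sub>R f c)"
  proof eventually_elim
    case (elim w)
    then obtain c0 where c0: "c0 \<in> C" "V w = c0" by blast
    have "(\<Sum>c\<in>C. indicator (?E c) w *\<^sub>R f c) = (\<Sum>c\<in>{c0}. indicator (?E c) w *\<^sub>R f c)"
      using C c0 by (intro sum.mono_neutral_right) (auto simp: indicator_def)
    then show ?case using c0 elim by (simp add: indicator_def)
  qed
  have "(\<integral>w. f (V w) \<partial>M) = (\<integral>w. (\<Sum>c\<in>C. indicator (?E c) w *\<^sub>R f c) \<partial>M)"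
    by (rule integral_cong_AE[OF f _ ae])
      (intro borel_measurable_sum borel_measurable_scaleR borel_measurable_indicator borel_measurable_const events)
  also have "\<dots> = (\<Sum>c\<in>C. \<integral>w. indicator (?E c) w *\<^sub>R f c \<partial>M)"
    by (intro Bochner_Integration.integral_sum integrable_scaleR_left integrable_real_indicator events)
      (simp_all add: less_top[symmetric])
  also have "\<dots> = (\<Sum>c\<in>C. prob (?E c) *\<^sub>R f c)"
    by (intro sum.cong refl) (simp add: events less_top[symmetric])
  finally show ?thesis .
qed

definition count_vector :: "nat \<Rightarrow> nat \<Rightarrow> (nat \<Rightarrow> nat) \<Rightarrow> nat \<Rightarrow> real" where
  "count_vector m N b l = (if l \<le> m then real (b l) else real N - (\<Sum>l'=1..m. real (b l')))"

lemma snap_vec_eq_count_vector: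
  "snap_vec N Q t m A k l w = count_vector (m k) N (\<lambda>l. Q (t k) (A k l) w) l"
  by (simp add: snap_vec_def count_vector_def)

lemma count_vector_restrict:
  "l \<in> {1..m+1} \<Longrightarrow> count_vector m N (restrict b {1..m}) l = count_vector m N b l"
  by (auto simp: count_vector_def)

lemma sum_mult_count_vector:
  "(\<Sum>l=1..m+1. \<xi> l * count_vector m N b l)
     = \<xi> (m+1) * real N + (\<Sum>l=1..m. (\<xi> l - \<xi> (m+1)) * real (b l))"
  by (simp add: count_vector_def algebra_simps sum_subtractf sum_distrib_left)

lemma char_binomial_counts:
  assumes p: "0 \<le> p" "p \<le> 1" and q: "\<And>l. l \<in> {1..m} \<Longrightarrow> q l \<le> N"
  shows "(\<Sum>b\<in>PiE {1..m} (\<lambda>_. {0..N}).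
            exp (\<i> * of_real (\<Sum>l=1..m+1. \<xi> l * count_vector m N b l))
          * of_real (\<Prod>l=1..m. pmf (binomial_pmf (q l) p) (b l)))
       = exp (\<i> * of_real (\<xi> (m+1))) ^ N *
         (\<Prod>l=1..m. (of_real p * exp (\<i> * of_real (\<xi> l - \<xi> (m+1))) + of_real (1 - p)) ^ q l)"
proof -
  define z where "z l = exp (\<i> * complex_of_real (\<xi> l - \<xi> (m+1)))" for l
  have exp_eq: "exp (\<i> * of_real (\<Sum>l=1..m+1. \<xi> l * count_vector m N b l))
      = exp (\<i> * of_real (\<xi> (m+1))) ^ N * (\<Prod>l=1..m. z l ^ b l)" for b
  proof -
    have "\<i> * of_real (\<Sum>l=1..m+1. \<xi> l * count_vector m N b l)
        = of_nat N * (\<i> * of_real (\<xi> (m+1))) + (\<Sum>l=1..m. of_nat (b l) * (\<i> * of_real (\<xi> l - \<xi> (m+1))))"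
      unfolding sum_mult_count_vector by (simp add: algebra_simps sum_distrib_left)
    then show ?thesis
      by (simp add: exp_add exp_sum exp_of_nat_mult z_def)
  qed
  have "(\<Sum>b\<in>PiE {1..m} (\<lambda>_. {0..N}).
            exp (\<i> * of_real (\<Sum>l=1..m+1. \<xi> l * count_vector m N b l))
          * of_real (\<Prod>l=1..m. pmf (binomial_pmf (q l) p) (b l)))
      = exp (\<i> * of_real (\<xi> (m+1))) ^ N *
        (\<Sum>b\<in>PiE {1..m} (\<lambda>_. {0..N}). \<Prod>l=1..m. of_real (pmf (binomial_pmf (q l) p) (b l)) * z l ^ b l)"
    unfolding exp_eq sum_distrib_left
    by (intro sum.cong refl) (simp add: of_real_prod prod.distrib mult_ac)
  also have "(\<Sum>b\<in>PiE {1..m} (\<lambda>_. {0..N}). \<Prod>l=1..m. of_real (pmf (binomial_pmf (q l) p) (b l)) * z l ^ b l)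
     = (\<Prod>l=1..m. \<Sum>s=0..N. of_real (pmf (binomial_pmf (q l) p) s) * z l ^ s)"
    by (rule prod_sum_PiE[symmetric]) auto
  also have "\<dots> = (\<Prod>l=1..m. (of_real p * z l + of_real (1 - p)) ^ q l)"
    by (intro prod.cong refl binomial_pmf_generating_function p q)
  finally show ?thesis by (simp add: z_def)
qed

text \<open>Law of the category of one individual at y: detected in A l (l \<le> m), or undetected or
  outside every A l (category m + 1).\<close>
definition category_prob :: "(nat \<Rightarrow> 'x set) \<Rightarrow> nat \<Rightarrow> real \<Rightarrow> nat \<Rightarrow> 'x \<Rightarrow> real" where
  "category_prob A m p l y =
     (if l \<le> m then p * indicator (A l) y else 1 - p * (\<Sum>l'=1..m. indicator (A l') y))"

lemma sum_category_prob: "(\<Sum>l=1..m+1. category_prob A m p l y) = 1"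
  by (simp add: category_prob_def sum_distrib_left)

lemma category_prob_nonneg:
  assumes "disjoint_family_on A {1..m}" "0 \<le> p" "p \<le> 1"
  shows "0 \<le> category_prob A m p l y"
proof -
  have "(\<Sum>l'=1..m. indicator (A l') y) = (indicator (\<Union>l'\<in>{1..m}. A l') y :: real)"
    using assms(1) by (rule indicator_UN_disjoint[symmetric, OF finite_atLeastAtMost])
  then have "(\<Sum>l'=1..m. indicator (A l') y) \<le> (1::real)"
    by (simp add: indicator_def)
  then have "p * (\<Sum>l'=1..m. indicator (A l') y) \<le> 1"
    using assms(2,3) by (intro mult_le_one sum_nonneg) auto
  then show ?thesis
    using assms(2) by (simp add: category_prob_def)
qed

lemma category_prob_le_1:
  assumes "0 \<le> p" "p \<le> 1"
  shows "category_prob A m p l y \<le> 1"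
  using assms by (auto simp: category_prob_def indicator_def intro!: mult_nonneg_nonneg sum_nonneg)

lemma borel_measurable_category_prob:
  assumes "\<And>l. l \<in> {1..m} \<Longrightarrow> A l \<in> sets borel" "l \<in> {1..m+1}"
  shows "category_prob A m p l \<in> borel_measurable borel"
  using assms unfolding category_prob_def by (cases "l \<le> m") auto

definition category_char :: "(nat \<Rightarrow> 'x set) \<Rightarrow> nat \<Rightarrow> real \<Rightarrow> (nat \<Rightarrow> real) \<Rightarrow> 'x \<Rightarrow> complex" where
  "category_char A m p \<xi> y = (\<Sum>l=1..m+1. exp (\<i> * of_real (\<xi> l)) * of_real (category_prob A m p l y))"

lemma norm_category_char_le_1:
  assumes "disjoint_family_on A {1..m}" "0 \<le> p" "p \<le> 1"
  shows "norm (category_char A m p \<xi> y) \<le> 1"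
proof -
  have "norm (category_char A m p \<xi> y) \<le> (\<Sum>l=1..m+1. category_prob A m p l y)"
    unfolding category_char_def using category_prob_nonneg[OF assms]
    by (intro sum_norm_le) (simp add: norm_mult)
  then show ?thesis by (simp only: sum_category_prob)
qed

lemma borel_measurable_category_char:
  assumes "\<And>l. l \<in> {1..m} \<Longrightarrow> A l \<in> sets borel"
  shows "category_char A m p \<xi> \<in> borel_measurable borel"
  unfolding category_char_def
  by (intro borel_measurable_sum borel_measurable_times borel_measurable_const
        measurable_compose[OF borel_measurable_category_prob borel_measurable_of_real] assms)

lemma category_char_eq_prod:
  assumes disj: "disjoint_family_on A {1..m}"
  shows "category_char A m p \<xi> y = exp (\<i> * of_real (\<xi> (m+1))) *
     (\<Prod>l=1..m. if y \<in> A l then of_real p * exp (\<i> * of_real (\<xi> l - \<xi> (m+1))) + of_real (1 - p) else 1)"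
proof (cases "\<exists>l\<in>{1..m}. y \<in> A l")
  case True
  then obtain l0 where l0: "l0 \<in> {1..m}" "y \<in> A l0" by blast
  have not_in: "y \<notin> A l" if "l \<in> {1..m}" "l \<noteq> l0" for l
    using disj l0 that unfolding disjoint_family_on_def by blast
  have "category_char A m p \<xi> y
      = exp (\<i> * of_real (\<xi> l0)) * of_real p + exp (\<i> * of_real (\<xi> (m+1))) * of_real (1 - p)"
  proof -
    have "(\<Sum>l'=1..m. indicator (A l') y) = (1::real)"
      using l0 not_in by (subst sum.remove[OF _ l0(1)]) (auto intro!: sum.neutral)
    moreover have "(\<Sum>l=1..m. exp (\<i> * of_real (\<xi> l)) * of_real (category_prob A m p l y))
        = exp (\<i> * of_real (\<xi> l0)) * of_real p"
      using l0 not_in by (subst sum.remove[OF _ l0(1)]) (auto intro!: sum.neutral simp: category_prob_def)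
    ultimately show ?thesis
      by (simp add: category_char_def category_prob_def)
  qed
  also have "\<dots> = exp (\<i> * of_real (\<xi> (m+1))) *
      (of_real p * exp (\<i> * of_real (\<xi> l0 - \<xi> (m+1))) + of_real (1 - p))"
    by (simp add: algebra_simps flip: exp_add)
  also have "\<dots> = exp (\<i> * of_real (\<xi> (m+1))) *
     (\<Prod>l=1..m. if y \<in> A l then of_real p * exp (\<i> * of_real (\<xi> l - \<xi> (m+1))) + of_real (1 - p) else 1)"
    using l0 not_in by (subst prod.remove[OF _ l0(1)]) (auto intro!: prod.neutral)
  finally show ?thesis .
next
  case False
  then show ?thesis
    by (auto simp: category_char_def category_prob_def indicator_def intro!: sum.neutral prod.neutral)
qed

lemma char_binomial_thinning:
  assumes p: "0 \<le> p" "p \<le> 1" and disj: "disjoint_family_on A {1..m}"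
  shows "(\<Sum>b\<in>PiE {1..m} (\<lambda>_. {0..N}).
            exp (\<i> * of_real (\<Sum>l=1..m+1. \<xi> l * count_vector m N b l))
          * of_real (\<Prod>l=1..m. pmf (binomial_pmf (card {j. j < N \<and> x j \<in> A l}) p) (b l)))
       = (\<Prod>j<N. category_char A m p \<xi> (x j))"
proof -
  let ?a = "\<lambda>l. of_real p * exp (\<i> * of_real (\<xi> l - \<xi> (m+1))) + complex_of_real (1 - p)"
  have card_le: "card {j. j < N \<and> x j \<in> A l} \<le> N" for l
    using card_mono[of "{..<N}" "{j. j < N \<and> x j \<in> A l}"] by auto
  have "(\<Prod>j<N. category_char A m p \<xi> (x j))
      = exp (\<i> * of_real (\<xi> (m+1))) ^ N * (\<Prod>j<N. \<Prod>l=1..m. if x j \<in> A l then ?a l else 1)"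
    by (simp add: category_char_eq_prod[OF disj] prod.distrib)
  also have "(\<Prod>j<N. \<Prod>l=1..m. if x j \<in> A l then ?a l else 1) = (\<Prod>l=1..m. ?a l ^ card {j. j < N \<and> x j \<in> A l})"
    by (simp add: prod_if_eq_power_card)
  finally show ?thesis
    by (simp only: char_binomial_counts[OF p card_le])
qed

lemma Phi_le: "Phi N X s B w \<le> N"
proof -
  have "Phi N X s B w \<le> card {..<N}"
    unfolding Phi_def by (intro card_mono) auto
  then show ?thesis by simp
qed

lemma measurable_Phi:
  assumes X: "\<And>j. j < N \<Longrightarrow> X j s \<in> borel_measurable M" and B: "B \<in> sets borel"
  shows "(\<lambda>w. Phi N X s B w) \<in> M \<rightarrow>\<^sub>M count_space UNIV"
proof (subst measurable_count_space_eq2_countable, safe)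
  fix a :: nat
  have Phi_eq: "real (Phi N X s B w) = (\<Sum>j<N. indicator B (X j s w))" for w
  proof -
    have "{j. j < N \<and> X j s w \<in> B} = {..<N} \<inter> {j. X j s w \<in> B}"
      by auto
    then show ?thesis
      by (simp add: Phi_def indicator_def sum.inter_filter[symmetric])
  qed
  have "(\<lambda>w. \<Sum>j<N. indicator B (X j s w) :: real) \<in> borel_measurable M"
    by (intro borel_measurable_sum measurable_compose[OF X borel_measurable_indicator[OF B]]) simp
  then have "{w\<in>space M. (\<Sum>j<N. indicator B (X j s w)) = real a} \<in> sets M"
    by measurable
  also have "{w\<in>space M. (\<Sum>j<N. indicator B (X j s w)) = real a} = (\<lambda>w. Phi N X s B w) -` {a} \<inter> space M"
    by (auto simp flip: Phi_eq)
  finally show "(\<lambda>w. Phi N X s B w) -` {a} \<inter> space M \<in> sets M" .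
qed auto

lemma (in prob_space) sigma_finite_subalgebra_snapshot_sigma:
  assumes X: "\<And>j s. j < N \<Longrightarrow> t0 \<le> s \<Longrightarrow> X j s \<in> borel_measurable M"
  shows "sigma_finite_subalgebra M (snapshot_sigma M N t0 X)"
proof -
  let ?G = "{X j t -` B \<inter> space M | j t B. j < N \<and> t0 \<le> t \<and> B \<in> sets borel}"
  have "?G \<subseteq> Pow (space M)" "?G \<subseteq> sets M"
    using X by (auto intro: measurable_sets)
  then have "subalgebra M (snapshot_sigma M N t0 X)"
    unfolding subalgebra_def snapshot_sigma_def
    by (auto simp: sets_measure_of space_measure_of_conv intro!: sets.sigma_sets_subset)
  then interpret finite_measure_subalgebra M "snapshot_sigma M N t0 X"
    by unfold_locales
  show ?thesis
    by (rule finite_measure_subalgebra_is_sigma_finite) unfold_locales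
qed

lemma Q_sigma_Collect:
  assumes "finite L" "\<And>l. l \<in> L \<Longrightarrow> B l \<in> sets borel"
  shows "{w\<in>space M. \<forall>l\<in>L. Q s (B l) w = c l} \<in> sets (Q_sigma M Q s)"
proof -
  let ?G = "{Q s A -` {c} \<inter> space M | A c. A \<in> sets borel}"
  have space: "space (Q_sigma M Q s) = space M"
    unfolding Q_sigma_def by (auto simp: space_measure_of_conv)
  have "Q s (B l) -` {c l} \<inter> space M \<in> sets (Q_sigma M Q s)" if "l \<in> L" for l
    unfolding Q_sigma_def using assms(2)[OF that]
    by (subst sets_measure_of) (auto intro!: sigma_sets.Basic)
  then have "{w\<in>space (Q_sigma M Q s). \<forall>l\<in>L. Q s (B l) w = c l} \<in> sets (Q_sigma M Q s)"
    using space by (intro sets.sets_Collect_finite_All[OF _ assms(1)]) (auto simp: vimage_def Int_def conj_commute)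
  then show ?thesis
    by (simp add: space)
qed

locale snapshot_model = prob_space M
  for M :: "'a measure" +
  fixes X :: "nat \<Rightarrow> real \<Rightarrow> 'a \<Rightarrow> 'x::topological_space"
    and X0 :: "real \<Rightarrow> 'a \<Rightarrow> 'x"
    and Q :: "real \<Rightarrow> 'x set \<Rightarrow> 'a \<Rightarrow> nat"
    and N :: nat and p t0 :: real
    and n :: nat and t :: "nat \<Rightarrow> real" and m :: "nat \<Rightarrow> nat"
    and A :: "nat \<Rightarrow> nat \<Rightarrow> 'x set"
  assumes p: "0 \<le> p" "p \<le> 1"
    and X0_meas: "\<And>s. t0 \<le> s \<Longrightarrow> X0 s \<in> borel_measurable M"
    and X_meas: "\<And>j s. j < N \<Longrightarrow> t0 \<le> s \<Longrightarrow> X j s \<in> borel_measurable M"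
    and X_indep: "indep_vars (\<lambda>_. Pi\<^sub>M {t0..} (\<lambda>_. borel)) (\<lambda>j w. restrict (\<lambda>s. X j s w) {t0..}) {..<N}"
    and X_ident: "\<And>j. j < N \<Longrightarrow>
        distr M (Pi\<^sub>M {t0..} (\<lambda>_. borel)) (\<lambda>w. restrict (\<lambda>s. X j s w) {t0..})
      = distr M (Pi\<^sub>M {t0..} (\<lambda>_. borel)) (\<lambda>w. restrict (\<lambda>s. X0 s w) {t0..})"
    and Q_meas: "\<And>s B. t0 \<le> s \<Longrightarrow> B \<in> sets borel \<Longrightarrow> Q s B \<in> measurable M (count_space UNIV)"
    and rule1: "snapshot_rule1 M (snapshot_sigma M N t0 X) Q t0"
    and rule2: "snapshot_rule2 M (snapshot_sigma M N t0 X) N X Q p t0"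
    and t_dist: "inj_on t {1..n}"
    and t_ge: "\<And>k. k \<in> {1..n} \<Longrightarrow> t0 \<le> t k"
    and A_borel: "\<And>k l. k \<in> {1..n} \<Longrightarrow> l \<in> {1..m k} \<Longrightarrow> A k l \<in> sets borel"
    and A_disj: "\<And>k. k \<in> {1..n} \<Longrightarrow> disjoint_family_on (A k) {1..m k}"
begin

abbreviation F :: "'a measure" where
  "F \<equiv> snapshot_sigma M N t0 X"

interpretation F: sigma_finite_subalgebra M F
  by (rule sigma_finite_subalgebra_snapshot_sigma[OF X_meas])

lemma cond_indep_prod:
  fixes s :: "nat \<Rightarrow> real" and K :: nat
  assumes s: "inj_on s {1..K}" "\<And>k. k \<in> {1..K} \<Longrightarrow> t0 \<le> s k"
    and E: "\<And>k. k \<in> {1..K} \<Longrightarrow> E k \<in> sets (Q_sigma M Q (s k))"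
  shows "AE w in M. real_cond_exp M F (\<lambda>w. \<Prod>k=1..K. indicator (E k) w) w
                   = (\<Prod>k=1..K. real_cond_exp M F (indicator (E k)) w)"
proof -
  have "inj_on (\<lambda>i. s (Suc i)) {..<K}"
  proof (rule inj_onI)
    fix i j assume "i \<in> {..<K}" "j \<in> {..<K}" "s (Suc i) = s (Suc j)"
    then have "Suc i = Suc j"
      by (intro inj_onD[OF s(1)]) auto
    then show "i = j" by simp
  qed
  moreover have "\<forall>i<K. t0 \<le> s (Suc i) \<and> E (Suc i) \<in> sets (Q_sigma M Q (s (Suc i)))"
    using s(2) E by simp
  ultimately have "inj_on (\<lambda>i. s (Suc i)) {..<K} \<and> (\<forall>i<K. t0 \<le> s (Suc i) \<and> E (Suc i) \<in> sets (Q_sigma M Q (s (Suc i))))"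
    by blast
  from rule1[unfolded snapshot_rule1_def, THEN spec[where x = K], THEN spec[where x = "\<lambda>i. s (Suc i)"],
      THEN spec[where x = "\<lambda>i. E (Suc i)"], THEN mp, OF this]
  show ?thesis
    by (simp add: prod.atLeast1_atMost_eq One_nat_def)
qed

lemma cond_binomial_counts:
  fixes B :: "nat \<Rightarrow> 'x set" and K :: nat
  assumes s: "t0 \<le> s" and B: "\<And>l. l \<in> {1..K} \<Longrightarrow> B l \<in> sets borel"
    and disj: "disjoint_family_on B {1..K}"
  shows "AE w in M. real_cond_exp M F (\<lambda>w. \<Prod>l=1..K. indicator {v\<in>space M. Q s (B l) v = c l} w) w
                   = (\<Prod>l=1..K. pmf (binomial_pmf (Phi N X s (B l) w) p) (c l))"
proof -
  have "disjoint_family_on (\<lambda>i. B (Suc i)) {..<K}"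
    unfolding disjoint_family_on_def
  proof (intro ballI impI)
    fix i j assume "i \<in> {..<K}" "j \<in> {..<K}" "i \<noteq> j"
    then show "B (Suc i) \<inter> B (Suc j) = {}"
      by (intro disjoint_family_onD[OF disj]) auto
  qed
  moreover have "\<forall>i<K. B (Suc i) \<in> sets borel"
    using B by simp
  ultimately have "t0 \<le> s \<and> (\<forall>i<K. B (Suc i) \<in> sets borel) \<and> disjoint_family_on (\<lambda>i. B (Suc i)) {..<K}"
    using s by blast
  from rule2[unfolded snapshot_rule2_def, THEN spec[where x = s], THEN spec[where x = K],
      THEN spec[where x = "\<lambda>i. B (Suc i)"], THEN spec[where x = "\<lambda>i. c (Suc i)"], THEN mp, OF this]
  show ?thesis
    by (simp add: prod.atLeast1_atMost_eq One_nat_def)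
qed

definition counts :: "'a \<Rightarrow> nat \<Rightarrow> nat \<Rightarrow> nat" where
  "counts w = (\<lambda>k\<in>{1..n}. \<lambda>l\<in>{1..m k}. Q (t k) (A k l) w)"

definition count_box :: "(nat \<Rightarrow> nat \<Rightarrow> nat) set" where
  "count_box = PiE {1..n} (\<lambda>k. PiE {1..m k} (\<lambda>_. {0..N}))"

definition binomial_likelihood :: "(nat \<Rightarrow> nat \<Rightarrow> nat) \<Rightarrow> 'a \<Rightarrow> real" where
  "binomial_likelihood c w = (\<Prod>k=1..n. \<Prod>l=1..m k. pmf (binomial_pmf (Phi N X (t k) (A k l) w) p) (c k l))"

lemma finite_count_box: "finite count_box"
  unfolding count_box_def by (intro finite_PiE) auto

lemma counts_eq_iff:
  assumes "c \<in> count_box"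
  shows "counts w = c \<longleftrightarrow> (\<forall>k\<in>{1..n}. \<forall>l\<in>{1..m k}. Q (t k) (A k l) w = c k l)"
  using assms unfolding counts_def count_box_def
  by (auto simp: fun_eq_iff PiE_iff extensional_def)

lemma count_eq_in_events:
  "k \<in> {1..n} \<Longrightarrow> l \<in> {1..m k} \<Longrightarrow> {w\<in>space M. Q (t k) (A k l) w = c} \<in> events"
  by (intro predE pred_count_space_const1 Q_meas t_ge A_borel)

lemma count_event_in_events:
  "{w\<in>space M. \<forall>k\<in>{1..n}. \<forall>l\<in>{1..m k}. Q (t k) (A k l) w = c k l} \<in> events"
  by (intro sets.sets_Collect_finite_All count_eq_in_events) auto

lemma borel_measurable_binomial_likelihood: "binomial_likelihood c \<in> borel_measurable M"
  unfolding binomial_likelihood_def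
  by (intro borel_measurable_prod measurable_compose[OF measurable_Phi]
      X_meas t_ge A_borel) auto

lemma binomial_likelihood_nonneg: "0 \<le> binomial_likelihood c w"
  unfolding binomial_likelihood_def by (intro prod_nonneg) auto

lemma binomial_likelihood_le_1: "binomial_likelihood c w \<le> 1"
  unfolding binomial_likelihood_def by (intro prod_le_1 conjI prod_nonneg pmf_le_1 pmf_nonneg)

lemma integrable_binomial_likelihood: "integrable M (binomial_likelihood c)"
  using binomial_likelihood_nonneg binomial_likelihood_le_1
  by (intro integrable_const_bound[where B = 1] AE_I2 borel_measurable_binomial_likelihood) simp

lemma sum_binomial_likelihood: "(\<Sum>c\<in>count_box. binomial_likelihood c w) = 1"
proof -
  have "(\<Sum>c\<in>count_box. binomial_likelihood c w)
      = (\<Prod>k=1..n. \<Prod>l=1..m k. \<Sum>s=0..N. pmf (binomial_pmf (Phi N X (t k) (A k l) w) p) s)"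
    unfolding binomial_likelihood_def count_box_def
    by (simp add: prod_sum_PiE finite_PiE)
  also have "\<dots> = 1"
    by (intro prod.neutral ballI sum_pmf_binomial_eq_1 p Phi_le)
  finally show ?thesis .
qed

lemma cond_prob_count_event_at:
  assumes k: "k \<in> {1..n}"
  shows "AE w in M. real_cond_exp M F (indicator {v\<in>space M. \<forall>l\<in>{1..m k}. Q (t k) (A k l) v = c l}) w
                   = (\<Prod>l=1..m k. pmf (binomial_pmf (Phi N X (t k) (A k l) w) p) (c l))"
proof -
  let ?I = "\<lambda>l. {v\<in>space M. Q (t k) (A k l) v = c l}"
  have "AE w in M. real_cond_exp M F (indicator {v\<in>space M. \<forall>l\<in>{1..m k}. Q (t k) (A k l) v = c l}) w
          = real_cond_exp M F (\<lambda>w. \<Prod>l=1..m k. indicator (?I l) w) w"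
    using k by (intro F.real_cond_exp_cong AE_I2 borel_measurable_indicator borel_measurable_prod
        sets.sets_Collect_finite_All count_eq_in_events) (auto simp: prod_indicator_Collect)
  moreover have "AE w in M. real_cond_exp M F (\<lambda>w. \<Prod>l=1..m k. indicator (?I l) w) w
          = (\<Prod>l=1..m k. pmf (binomial_pmf (Phi N X (t k) (A k l) w) p) (c l))"
    using k by (intro cond_binomial_counts t_ge A_borel A_disj)
  ultimately show ?thesis
    by eventually_elim simp
qed

lemma cond_prob_count_event:
  "AE w in M. real_cond_exp M F (indicator {v\<in>space M. \<forall>k\<in>{1..n}. \<forall>l\<in>{1..m k}. Q (t k) (A k l) v = c k l}) w
              = binomial_likelihood c w"
proof -
  let ?E = "\<lambda>k. {v\<in>space M. \<forall>l\<in>{1..m k}. Q (t k) (A k l) v = c k l}"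
  have "AE w in M. real_cond_exp M F (indicator {v\<in>space M. \<forall>k\<in>{1..n}. \<forall>l\<in>{1..m k}. Q (t k) (A k l) v = c k l}) w
          = real_cond_exp M F (\<lambda>w. \<Prod>k=1..n. indicator (?E k) w) w"
    by (intro F.real_cond_exp_cong AE_I2 borel_measurable_indicator borel_measurable_prod
        sets.sets_Collect_finite_All count_eq_in_events count_event_in_events) (auto simp: prod_indicator_Collect)
  moreover have "AE w in M. real_cond_exp M F (\<lambda>w. \<Prod>k=1..n. indicator (?E k) w) w
          = (\<Prod>k=1..n. real_cond_exp M F (indicator (?E k)) w)"
    using A_borel by (intro cond_indep_prod[OF t_dist t_ge] Q_sigma_Collect) auto
  moreover have "AE w in M. \<forall>k\<in>{1..n}. real_cond_exp M F (indicator (?E k)) w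
          = (\<Prod>l=1..m k. pmf (binomial_pmf (Phi N X (t k) (A k l) w) p) (c k l))"
    by (intro eventually_ball_finite ballI cond_prob_count_event_at) auto
  ultimately show ?thesis
    by eventually_elim (simp add: binomial_likelihood_def)
qed

lemma prob_counts_eq:
  assumes "c \<in> count_box"
  shows "prob {w\<in>space M. counts w = c} = (\<integral>w. binomial_likelihood c w \<partial>M)"
proof -
  let ?E = "{w\<in>space M. \<forall>k\<in>{1..n}. \<forall>l\<in>{1..m k}. Q (t k) (A k l) w = c k l}"
  have "prob {w\<in>space M. counts w = c} = prob ?E"
    using counts_eq_iff[OF assms] by simp
  also have "\<dots> = (\<integral>w. indicator ?E w \<partial>M)"
    using count_event_in_events by (simp add: Int_absorb2)
  also have "\<dots> = (\<integral>w. real_cond_exp M F (indicator ?E) w \<partial>M)"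
    using count_event_in_events
    by (intro F.real_cond_exp_int(2)[symmetric] integrable_real_indicator) (simp_all add: less_top[symmetric])
  also have "\<dots> = (\<integral>w. binomial_likelihood c w \<partial>M)"
    using cond_prob_count_event
    by (intro integral_cong_AE borel_measurable_binomial_likelihood) auto
  finally show ?thesis .
qed

lemma sum_prob_counts: "(\<Sum>c\<in>count_box. prob {w\<in>space M. counts w = c}) = 1"
proof -
  have "(\<Sum>c\<in>count_box. prob {w\<in>space M. counts w = c}) = (\<integral>w. (\<Sum>c\<in>count_box. binomial_likelihood c w) \<partial>M)"
    by (simp add: prob_counts_eq integrable_binomial_likelihood)
  then show ?thesis
    by (simp add: sum_binomial_likelihood prob_space)
qed

definition count_phase :: "(nat \<Rightarrow> nat \<Rightarrow> real) \<Rightarrow> (nat \<Rightarrow> nat \<Rightarrow> nat) \<Rightarrow> real" where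
  "count_phase \<xi> c = (\<Sum>k=1..n. \<Sum>l=1..m k + 1. \<xi> k l * count_vector (m k) N (c k) l)"

lemma sum_snap_vec_eq_count_phase:
  "(\<Sum>k=1..n. \<Sum>l=1..m k + 1. \<xi> k l * snap_vec N Q t m A k l w) = count_phase \<xi> (counts w)"
  unfolding count_phase_def snap_vec_eq_count_vector
proof (intro sum.cong refl)
  fix k l assume "k \<in> {1..n}" "l \<in> {1..m k + 1}"
  then show "\<xi> k l * count_vector (m k) N (\<lambda>l. Q (t k) (A k l) w) l = \<xi> k l * count_vector (m k) N (counts w k) l"
    using count_vector_restrict[of l "m k" N "\<lambda>l. Q (t k) (A k l) w"] by (simp add: counts_def)
qed

lemma borel_measurable_snap_vec:
  assumes "k \<in> {1..n}" "l \<in> {1..m k + 1}"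
  shows "snap_vec N Q t m A k l \<in> borel_measurable M"
proof -
  have "(\<lambda>w. real (Q (t k) (A k l') w)) \<in> borel_measurable M" if "l' \<in> {1..m k}" for l'
    using assms that by (intro measurable_compose[OF Q_meas] t_ge A_borel) auto
  with assms(2) show ?thesis
    unfolding snap_vec_def[abs_def] by (cases "l \<le> m k") (auto intro!: borel_measurable_sum)
qed

lemma sum_binomial_likelihood_char:
  "(\<Sum>c\<in>count_box. of_real (binomial_likelihood c w) * exp (\<i> * of_real (count_phase \<xi> c)))
     = (\<Prod>k=1..n. \<Prod>j<N. category_char (A k) (m k) p (\<xi> k) (X j (t k) w))"
proof -
  let ?f = "\<lambda>k b. exp (\<i> * of_real (\<Sum>l=1..m k + 1. \<xi> k l * count_vector (m k) N b l))
      * of_real (\<Prod>l=1..m k. pmf (binomial_pmf (Phi N X (t k) (A k l) w) p) (b l))"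
  have "of_real (binomial_likelihood c w) * exp (\<i> * of_real (count_phase \<xi> c)) = (\<Prod>k=1..n. ?f k (c k))" for c
    by (simp add: binomial_likelihood_def count_phase_def of_real_prod sum_distrib_left exp_sum prod.distrib mult_ac)
  then have "(\<Sum>c\<in>count_box. of_real (binomial_likelihood c w) * exp (\<i> * of_real (count_phase \<xi> c)))
      = (\<Prod>k=1..n. \<Sum>b\<in>PiE {1..m k} (\<lambda>_. {0..N}). ?f k b)"
    unfolding count_box_def by (simp add: prod_sum_PiE finite_PiE)
  also have "\<dots> = (\<Prod>k=1..n. \<Prod>j<N. category_char (A k) (m k) p (\<xi> k) (X j (t k) w))"
    unfolding Phi_def by (intro prod.cong refl char_binomial_thinning p A_disj)
  finally show ?thesis .
qed

lemma char_snap_vec_eq_integral_category_char: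
  "(LINT w|M. exp (\<i> * of_real (\<Sum>k=1..n. \<Sum>l=1..m k + 1. \<xi> k l * snap_vec N Q t m A k l w)))
     = (LINT w|M. (\<Prod>k=1..n. \<Prod>j<N. category_char (A k) (m k) p (\<xi> k) (X j (t k) w)))"
proof -
  let ?e = "\<lambda>c. exp (\<i> * complex_of_real (count_phase \<xi> c))"
  have "(\<lambda>w. \<Sum>k=1..n. \<Sum>l=1..m k + 1. \<xi> k l * snap_vec N Q t m A k l w) \<in> borel_measurable M"
    by (intro borel_measurable_sum borel_measurable_times borel_measurable_const borel_measurable_snap_vec) auto
  then have "(\<lambda>w. ?e (counts w)) \<in> borel_measurable M"
    unfolding sum_snap_vec_eq_count_phase[symmetric] by measurable
  then have "(LINT w|M. ?e (counts w)) = (\<Sum>c\<in>count_box. prob {w\<in>space M. counts w = c} *\<^sub>R ?e c)"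
    using finite_count_box sum_prob_counts counts_eq_iff count_event_in_events
    by (intro integral_comp_finitely_valued) auto
  also have "\<dots> = (LINT w|M. (\<Sum>c\<in>count_box. of_real (binomial_likelihood c w) * ?e c))"
    by (simp add: prob_counts_eq integrable_binomial_likelihood scaleR_conv_of_real)
  also have "\<dots> = (LINT w|M. (\<Prod>k=1..n. \<Prod>j<N. category_char (A k) (m k) p (\<xi> k) (X j (t k) w)))"
    by (simp only: sum_binomial_likelihood_char)
  finally show ?thesis
    by (simp only: sum_snap_vec_eq_count_phase)
qed

definition category_profile :: "(nat \<Rightarrow> nat \<Rightarrow> real) \<Rightarrow> (real \<Rightarrow> 'x) \<Rightarrow> complex" where
  "category_profile \<xi> x = (\<Prod>k=1..n. category_char (A k) (m k) p (\<xi> k) (x (t k)))"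

lemma norm_category_profile_le_1: "norm (category_profile \<xi> x) \<le> 1"
  unfolding category_profile_def prod_norm[symmetric]
  by (intro prod_le_1 conjI norm_ge_zero norm_category_char_le_1 A_disj p) auto

lemma borel_measurable_category_profile:
  "category_profile \<xi> \<in> borel_measurable (Pi\<^sub>M {t0..} (\<lambda>_. borel))"
  unfolding category_profile_def
proof (intro borel_measurable_prod)
  fix k assume k: "k \<in> {1..n}"
  then have "(\<lambda>x. x (t k)) \<in> Pi\<^sub>M {t0..} (\<lambda>_. borel) \<rightarrow>\<^sub>M borel"
    using t_ge by (intro measurable_component_singleton) auto
  with k show "(\<lambda>x. category_char (A k) (m k) p (\<xi> k) (x (t k))) \<in> borel_measurable (Pi\<^sub>M {t0..} (\<lambda>_. borel))"
    by (intro measurable_compose[OF _ borel_measurable_category_char] A_borel)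
qed

lemma integral_prod_category_char_eq_power:
  "(LINT w|M. (\<Prod>k=1..n. \<Prod>j<N. category_char (A k) (m k) p (\<xi> k) (X j (t k) w)))
     = (LINT w|M. category_profile \<xi> (restrict (\<lambda>s. X0 s w) {t0..})) ^ N"
proof -
  have "(\<Prod>k=1..n. \<Prod>j<N. category_char (A k) (m k) p (\<xi> k) (X j (t k) w))
      = (\<Prod>j<N. category_profile \<xi> (restrict (\<lambda>s. X j s w) {t0..}))" for w
    unfolding category_profile_def using t_ge by (subst prod.swap) (auto intro!: prod.cong)
  moreover have "(LINT w|M. (\<Prod>j<N. category_profile \<xi> (restrict (\<lambda>s. X j s w) {t0..})))
      = (LINT w|M. category_profile \<xi> (restrict (\<lambda>s. X0 s w) {t0..})) ^ card {..<N}"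
    using X0_meas
    by (intro integral_prod_iid[OF X_indep, where B = 1] X_ident measurable_restrict borel_measurable_category_profile
        norm_category_profile_le_1) auto
  ultimately show ?thesis
    by simp
qed

definition path_prob :: "(nat \<Rightarrow> nat) \<Rightarrow> real" where
  "path_prob L = (\<integral>w. (\<Prod>k=1..n. category_prob (A k) (m k) p (L k) (X0 (t k) w)) \<partial>M)"

lemma integrable_prod_category_prob:
  assumes "L \<in> PiE {1..n} (\<lambda>k. {1..m k + 1})"
  shows "integrable M (\<lambda>w. \<Prod>k=1..n. category_prob (A k) (m k) p (L k) (X0 (t k) w))"
proof (rule integrable_const_bound[where B = 1])
  have "0 \<le> (\<Prod>k=1..n. category_prob (A k) (m k) p (L k) (X0 (t k) w))"
    "(\<Prod>k=1..n. category_prob (A k) (m k) p (L k) (X0 (t k) w)) \<le> 1" for w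
    by (intro prod_nonneg prod_le_1 conjI ballI category_prob_nonneg category_prob_le_1 A_disj p; simp)+
  then show "AE w in M. norm (\<Prod>k=1..n. category_prob (A k) (m k) p (L k) (X0 (t k) w)) \<le> 1"
    by simp
  show "(\<lambda>w. \<Prod>k=1..n. category_prob (A k) (m k) p (L k) (X0 (t k) w)) \<in> borel_measurable M"
    using assms
    by (intro borel_measurable_prod measurable_compose[OF X0_meas borel_measurable_category_prob] t_ge A_borel)
      auto
qed

lemma path_prob_nonneg: "0 \<le> path_prob L"
  unfolding path_prob_def by (intro integral_nonneg_AE AE_I2 prod_nonneg category_prob_nonneg A_disj p) auto

lemma sum_path_prob: "(\<Sum>L\<in>PiE {1..n} (\<lambda>k. {1..m k + 1}). path_prob L) = 1"
proof -
  have "(\<Sum>L\<in>PiE {1..n} (\<lambda>k. {1..m k + 1}). path_prob L)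
      = (\<integral>w. (\<Sum>L\<in>PiE {1..n} (\<lambda>k. {1..m k + 1}). \<Prod>k=1..n. category_prob (A k) (m k) p (L k) (X0 (t k) w)) \<partial>M)"
    unfolding path_prob_def by (intro Bochner_Integration.integral_sum[symmetric] integrable_prod_category_prob)
  also have "\<dots> = (\<integral>w. (\<Prod>k=1..n. \<Sum>l=1..m k + 1. category_prob (A k) (m k) p l (X0 (t k) w)) \<partial>M)"
    by (subst prod_sum_PiE) auto
  also have "\<dots> = 1"
    by (simp only: sum_category_prob prod.neutral_const) (simp add: prob_space)
  finally show ?thesis .
qed

lemma category_profile_eq_sum_paths:
  "category_profile \<xi> (restrict (\<lambda>s. X0 s w) {t0..})
     = (\<Sum>L\<in>PiE {1..n} (\<lambda>k. {1..m k + 1}). exp (\<i> * of_real (\<Sum>k=1..n. \<xi> k (L k)))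
          * of_real (\<Prod>k=1..n. category_prob (A k) (m k) p (L k) (X0 (t k) w)))"
proof -
  have "category_profile \<xi> (restrict (\<lambda>s. X0 s w) {t0..})
      = (\<Prod>k=1..n. \<Sum>l=1..m k + 1. exp (\<i> * of_real (\<xi> k l)) * of_real (category_prob (A k) (m k) p l (X0 (t k) w)))"
    unfolding category_profile_def category_char_def using t_ge by (intro prod.cong refl) auto
  also have "\<dots> = (\<Sum>L\<in>PiE {1..n} (\<lambda>k. {1..m k + 1}).
      \<Prod>k=1..n. exp (\<i> * of_real (\<xi> k (L k))) * of_real (category_prob (A k) (m k) p (L k) (X0 (t k) w)))"
    by (rule prod_sum_PiE) auto
  also have "\<dots> = (\<Sum>L\<in>PiE {1..n} (\<lambda>k. {1..m k + 1}). exp (\<i> * of_real (\<Sum>k=1..n. \<xi> k (L k)))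
         * of_real (\<Prod>k=1..n. category_prob (A k) (m k) p (L k) (X0 (t k) w)))"
    by (simp add: prod.distrib of_real_prod sum_distrib_left exp_sum)
  finally show ?thesis .
qed

lemma integral_category_profile:
  "(LINT w|M. category_profile \<xi> (restrict (\<lambda>s. X0 s w) {t0..}))
     = (\<Sum>L\<in>PiE {1..n} (\<lambda>k. {1..m k + 1}). exp (\<i> * of_real (\<Sum>k=1..n. \<xi> k (L k))) * of_real (path_prob L))"
proof -
  have "(LINT w|M. category_profile \<xi> (restrict (\<lambda>s. X0 s w) {t0..}))
      = (\<Sum>L\<in>PiE {1..n} (\<lambda>k. {1..m k + 1}). LINT w|M. exp (\<i> * of_real (\<Sum>k=1..n. \<xi> k (L k)))
           * of_real (\<Prod>k=1..n. category_prob (A k) (m k) p (L k) (X0 (t k) w)))"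
    unfolding category_profile_eq_sum_paths
    by (intro Bochner_Integration.integral_sum integrable_mult_right integrable_of_real integrable_prod_category_prob)
  also have "\<dots> = (\<Sum>L\<in>PiE {1..n} (\<lambda>k. {1..m k + 1}). exp (\<i> * of_real (\<Sum>k=1..n. \<xi> k (L k))) * of_real (path_prob L))"
    by (simp only: integral_mult_right_zero integral_complex_of_real path_prob_def)
  finally show ?thesis .
qed

end

theorem proposition6:
  fixes M :: "'a measure"
    and X :: "nat \<Rightarrow> real \<Rightarrow> 'a \<Rightarrow> real ^ 'd"
    and X0 :: "real \<Rightarrow> 'a \<Rightarrow> real ^ 'd"
    and Q :: "real \<Rightarrow> (real ^ 'd) set \<Rightarrow> 'a \<Rightarrow> nat"
    and N :: nat and p t0 :: real
    and n :: nat and t :: "nat \<Rightarrow> real" and m :: "nat \<Rightarrow> nat"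
    and A :: "nat \<Rightarrow> nat \<Rightarrow> (real ^ 'd) set"
  assumes P: "prob_space M"
    and p: "0 \<le> p" "p \<le> 1"
    and X0_meas: "\<And>s. t0 \<le> s \<Longrightarrow> X0 s \<in> borel_measurable M"
    and X_meas: "\<And>j s. j < N \<Longrightarrow> t0 \<le> s \<Longrightarrow> X j s \<in> borel_measurable M"
    and X_indep: "prob_space.indep_vars M (\<lambda>_. Pi\<^sub>M {t0..} (\<lambda>_. borel))
                    (\<lambda>j w. restrict (\<lambda>s. X j s w) {t0..}) {..<N}"
    and X_ident: "\<And>j. j < N \<Longrightarrow>
        distr M (Pi\<^sub>M {t0..} (\<lambda>_. borel)) (\<lambda>w. restrict (\<lambda>s. X j s w) {t0..})
      = distr M (Pi\<^sub>M {t0..} (\<lambda>_. borel)) (\<lambda>w. restrict (\<lambda>s. X0 s w) {t0..})"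
    and Q_meas: "\<And>s B. t0 \<le> s \<Longrightarrow> B \<in> sets borel \<Longrightarrow> Q s B \<in> measurable M (count_space UNIV)"
    and rule1: "snapshot_rule1 M (snapshot_sigma M N t0 X) Q t0"
    and rule2: "snapshot_rule2 M (snapshot_sigma M N t0 X) N X Q p t0"
    and t_dist: "inj_on t {1..n}"
    and t_ge: "\<And>k. k \<in> {1..n} \<Longrightarrow> t0 \<le> t k"
    and A_borel: "\<And>k l. k \<in> {1..n} \<Longrightarrow> l \<in> {1..m k} \<Longrightarrow> A k l \<in> sets borel"
    and A_disj: "\<And>k. k \<in> {1..n} \<Longrightarrow> disjoint_family_on (A k) {1..m k}"
  shows "\<exists>\<pi> :: (nat \<Rightarrow> nat) \<Rightarrow> real.
           (\<forall>L \<in> Pi\<^sub>E {1..n} (\<lambda>k. {1..m k + 1}). 0 \<le> \<pi> L)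
         \<and> (\<Sum>L \<in> Pi\<^sub>E {1..n} (\<lambda>k. {1..m k + 1}). \<pi> L) = 1
         \<and> (\<forall>\<xi> :: nat \<Rightarrow> nat \<Rightarrow> real.
              (LINT w|M. exp (\<i> * complex_of_real
                   (\<Sum>k=1..n. \<Sum>l=1..m k + 1. \<xi> k l * snap_vec N Q t m A k l w)))
            = (\<Sum>L \<in> Pi\<^sub>E {1..n} (\<lambda>k. {1..m k + 1}).
                  exp (\<i> * complex_of_real (\<Sum>k=1..n. \<xi> k (L k))) * complex_of_real (\<pi> L)) ^ N)"
proof -
  interpret snapshot_model M X X0 Q N p t0 n t m A
    by (intro snapshot_model.intro snapshot_model_axioms.intro) (fact assms)+
  show ?thesis
  proof (intro exI[of _ path_prob] conjI allI ballI)
    show "0 \<le> path_prob L" for L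
      by (rule path_prob_nonneg)
    show "(\<Sum>L \<in> Pi\<^sub>E {1..n} (\<lambda>k. {1..m k + 1}). path_prob L) = 1"
      by (rule sum_path_prob)
    show "(LINT w|M. exp (\<i> * complex_of_real
             (\<Sum>k=1..n. \<Sum>l=1..m k + 1. \<xi> k l * snap_vec N Q t m A k l w)))
          = (\<Sum>L \<in> Pi\<^sub>E {1..n} (\<lambda>k. {1..m k + 1}).
               exp (\<i> * complex_of_real (\<Sum>k=1..n. \<xi> k (L k))) * complex_of_real (path_prob L)) ^ N" for \<xi>
      by (simp only: char_snap_vec_eq_integral_category_char integral_prod_category_char_eq_power
          integral_category_profile)
  qed
qed

end
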